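(* Let $P:\mathbf{R}^{24}\to\mathbf{R}$, $P(X,Y,Z)=\mathrm{Re}((oX\cdot oY)\cdot oZ)$, let $H\subset\mathbf{R}^{24}$ be a 21-dimensional linear subspace and $S^{20}_1$ its unit sphere. Let $\delta\in[1,2)$, $a,\bar b\in S^{20}_1$, $W=P(a)$, $\bar W=P(\bar b)$, and let $$\mu_1(\delta)=\tfrac{2}{\sqrt3}\cos\Big(\tfrac{\arccos(3\sqrt3W)-\pi}{3}\Big)-W\delta,\quad \mu_2(\delta)=\tfrac{2}{\sqrt3}\cos\Big(\tfrac{\arccos(3\sqrt3W)+\pi}{3}\Big)-W\delta,$$ $$\mu_3(\delta)=-\tfrac{2}{\sqrt3}\cos\Big(\tfrac{\arccos(3\sqrt3W)}{3}\Big)-W\delta,$$ which satisfy $\mu_1(\delta)\ge\mu_2(\delta)\ge\mu_3(\delta)$ and are the roots of $T^3+3W\delta T^2+(3W^2\delta^2-1)T+W(2-\delta)+W^3\delta^3$ (i.e. of $Q(T+\delta W)$ where $Q(T)=T^3-T+2W$); define $\bar\mu_1(\delta)\ge\bar\mu_2(\delta)\ge\bar\mu_3(\delta)$ by the same formulas with $W$ replaced by $\bar W$. For $K>0$ put $$\mu_-(K)=\min_{i=1,2,3}\big(\mu_i(\delta)-K\bar\mu_i(\delta)\big),\qquad \mu_+(K)=\max_{i=1,2,3}\big(\mu_i(\delta)-K\bar\mu_i(\delta)\big).$$ Then for every $K>0$ with $|K-1|+|\bar W-W|\neq0$, $$\frac{2-\delta}{4+\delta}\le\frac{\mu_+(K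)}{-\mu_-(K)}\le\frac{4+\delta}{2-\delta}.$$
   Context: $\mathcal{O}$ denotes the algebra of Cayley octonions: the 8-dimensional real algebra with basis $1,e_1,\dots,e_7$, where $1$ is the unit, $e_i^2=-1$, $e_ie_j=-e_je_i$ for $i\neq j$, and for every $i$ (indices mod 7) $e_ie_{i+1}=e_{i+3}$, $e_{i+1}e_{i+3}=e_i$, $e_{i+3}e_i=e_{i+1}$. For $t\in\mathbf{R}^8$, $ot=t_0+t_1e_1+\dots+t_7e_7$; $\mathrm{Re}$ is the coefficient of $1$; $\mathbf{R}^{24}=(\mathbf{R}^8)^3$. On the unit sphere of $\mathbf{R}^{24}$ one has $|P|\le 1/(3\sqrt3)$. *)

theory Defs
  imports "HOL-Analysis.Analysis"
begin

text \<open>Octonion units e_1..e_7 are labelled 1..7 (index 0 is the unit 1).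
  The lines of the Fano plane are (m, m+1, m+3) with indices taken mod 7
  in the range 1..7.\<close>

definition oct_lbl :: "nat \<Rightarrow> nat \<Rightarrow> nat" where
  "oct_lbl m t = ((m + t - 1) mod 7) + 1"

definition oct_pos :: "nat \<Rightarrow> nat \<Rightarrow> nat \<Rightarrow> bool" where
  "oct_pos i j k \<longleftrightarrow> (\<exists>m\<in>{1..7}.
      (i, j, k) = (oct_lbl m 0, oct_lbl m 1, oct_lbl m 3) \<or>
      (i, j, k) = (oct_lbl m 1, oct_lbl m 3, oct_lbl m 0) \<or>
      (i, j, k) = (oct_lbl m 3, oct_lbl m 0, oct_lbl m 1))"

definition oct_c :: "nat \<Rightarrow> nat \<Rightarrow> nat \<Rightarrow> real" where
  "oct_c i j k =
     (if i = 0 then (if j = k then 1 else 0)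
      else if j = 0 then (if i = k then 1 else 0)
      else if i = j then (if k = 0 then -1 else 0)
      else if oct_pos i j k then 1
      else if oct_pos j i k then -1
      else 0)"

definition oct_mult :: "(nat \<Rightarrow> real) \<Rightarrow> (nat \<Rightarrow> real) \<Rightarrow> (nat \<Rightarrow> real)" where
  "oct_mult x y = (\<lambda>k. \<Sum>i<8. \<Sum>j<8. x i * y j * oct_c i j k)"

definition oct_of :: "real^8 \<Rightarrow> (nat \<Rightarrow> real)" where
  "oct_of t = (\<lambda>k. t $ (of_nat k :: 8))"

definition oct_Re :: "(nat \<Rightarrow> real) \<Rightarrow> real" where
  "oct_Re x = x 0"

definition P24 :: "(real^8) \<times> (real^8) \<times> (real^8) \<Rightarrow> real" where
  "P24 v = (case v of (X, Y, Z) \<Rightarrow>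
      oct_Re (oct_mult (oct_mult (oct_of X) (oct_of Y)) (oct_of Z)))"

definition mu :: "real \<Rightarrow> real \<Rightarrow> nat \<Rightarrow> real" where
  "mu W \<delta> i =
     (if i = 1 then 2 / sqrt 3 * cos ((arccos (3 * sqrt 3 * W) - pi) / 3) - W * \<delta>
      else if i = 2 then 2 / sqrt 3 * cos ((arccos (3 * sqrt 3 * W) + pi) / 3) - W * \<delta>
      else - (2 / sqrt 3) * cos (arccos (3 * sqrt 3 * W) / 3) - W * \<delta>)"

definition mu_minus :: "real \<Rightarrow> real \<Rightarrow> real \<Rightarrow> real \<Rightarrow> real" where
  "mu_minus W Wb \<delta> K = Min ((\<lambda>i. mu W \<delta> i - K * mu Wb \<delta> i) ` {1,2,3})"

definition mu_plus :: "real \<Rightarrow> real \<Rightarrow> real \<Rightarrow> real \<Rightarrow> real" where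
  "mu_plus W Wb \<delta> K = Max ((\<lambda>i. mu W \<delta> i - K * mu Wb \<delta> i) ` {1,2,3})"

end

theory Submission
  imports Defs
begin

text \<open>On the unit sphere of \<open>\<real>\<^sup>2\<^sup>4\<close> we have \<open>27 P\<^sup>2 \<le> 1\<close>: the octonion norm is
  multiplicative and \<open>Re (x y)\<close> is an inner product, so \<open>|P(X,Y,Z)| \<le> |X| |Y| |Z|\<close>, and AM-GM
  bounds the product. Hence, by Viete's trigonometric formula, the numbers \<open>t\<^sub>i = \<mu>\<^sub>i(\<delta>) + W \<delta>\<close>
  are the three roots of \<open>T\<^sup>3 - T + 2 W\<close>, and likewise the \<open>s\<^sub>i\<close> for \<open>W' = P(b)\<close>.
  Put \<open>u\<^sub>i = t\<^sub>i - K s\<^sub>i\<close>, \<open>e = W - K W'\<close> and \<open>k\<^sup>3 = K\<close>. Then \<open>u\<^sub>i - 2 e = t\<^sub>i\<^sup>3 - (k s\<^sub>i)\<^sup>3\<close>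
  has the sign of \<open>t\<^sub>i - k s\<^sub>i\<close>, and as both root triples sum to zero, \<open>2 e\<close> lies between the
  smallest and the largest \<open>u\<^sub>i\<close>. Since the \<open>u\<^sub>i\<close> also sum to zero and are not all zero, the
  bounds on \<open>max (u\<^sub>i - \<delta> e) / (- min (u\<^sub>i - \<delta> e))\<close> are linear consequences of these facts.\<close>

lemma lessThan_8: "{..<8::nat} = {0, 1, 2, 3, 4, 5, 6, 7}"
  by (simp add: lessThan_nat_numeral lessThan_Suc) auto

lemma sum_lessThan_8: "(\<Sum>k<8::nat. f k) = f 0 + f 1 + f 2 + f 3 + f 4 + f 5 + f 6 + (f 7 :: real)"
  by (simp add: lessThan_8)

lemma oct_pos_iff:
  "oct_pos i j k \<longleftrightarrow> (i, j, k) \<in> {(1,2,4), (2,4,1), (4,1,2), (2,3,5), (3,5,2), (5,2,3),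
     (3,4,6), (4,6,3), (6,3,4), (4,5,7), (5,7,4), (7,4,5), (5,6,1), (6,1,5), (1,5,6),
     (6,7,2), (7,2,6), (2,6,7), (7,1,3), (1,3,7), (3,7,1)}"
proof -
  have seven: "{1..7::nat} = {1, 2, 3, 4, 5, 6, 7}"
    by auto
  have labels: "oct_lbl 1 0 = 1" "oct_lbl 1 1 = 2" "oct_lbl 1 3 = 4"
    "oct_lbl 2 0 = 2" "oct_lbl 2 1 = 3" "oct_lbl 2 3 = 5"
    "oct_lbl 3 0 = 3" "oct_lbl 3 1 = 4" "oct_lbl 3 3 = 6"
    "oct_lbl 4 0 = 4" "oct_lbl 4 1 = 5" "oct_lbl 4 3 = 7"
    "oct_lbl 5 0 = 5" "oct_lbl 5 1 = 6" "oct_lbl 5 3 = 1"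
    "oct_lbl 6 0 = 6" "oct_lbl 6 1 = 7" "oct_lbl 6 3 = 2"
    "oct_lbl 7 0 = 7" "oct_lbl 7 1 = 1" "oct_lbl 7 3 = 3"
    by (simp_all add: oct_lbl_def)
  show ?thesis
    unfolding oct_pos_def
    by (simp only: seven labels bex_simps insert_iff empty_iff disj_assoc simp_thms)
qed

lemma oct_mult_coeffs:
  "oct_mult x y 0 = x 0 * y 0 - x 1 * y 1 - x 2 * y 2 - x 3 * y 3 - x 4 * y 4 - x 5 * y 5 - x 6 * y 6 - x 7 * y 7"
  "oct_mult x y 1 = x 0 * y 1 + x 1 * y 0 + x 2 * y 4 + x 3 * y 7 - x 4 * y 2 + x 5 * y 6 - x 6 * y 5 - x 7 * y 3"
  "oct_mult x y 2 = x 0 * y 2 - x 1 * y 4 + x 2 * y 0 + x 3 * y 5 + x 4 * y 1 - x 5 * y 3 + x 6 * y 7 - x 7 * y 6"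
  "oct_mult x y 3 = x 0 * y 3 - x 1 * y 7 - x 2 * y 5 + x 3 * y 0 + x 4 * y 6 + x 5 * y 2 - x 6 * y 4 + x 7 * y 1"
  "oct_mult x y 4 = x 0 * y 4 + x 1 * y 2 - x 2 * y 1 - x 3 * y 6 + x 4 * y 0 + x 5 * y 7 + x 6 * y 3 - x 7 * y 5"
  "oct_mult x y 5 = x 0 * y 5 - x 1 * y 6 + x 2 * y 3 - x 3 * y 2 - x 4 * y 7 + x 5 * y 0 + x 6 * y 1 + x 7 * y 4"
  "oct_mult x y 6 = x 0 * y 6 + x 1 * y 5 - x 2 * y 7 + x 3 * y 4 - x 4 * y 3 - x 5 * y 1 + x 6 * y 0 + x 7 * y 2"
  "oct_mult x y 7 = x 0 * y 7 + x 1 * y 3 + x 2 * y 6 - x 3 * y 1 + x 4 * y 5 - x 5 * y 4 - x 6 * y 2 + x 7 * y 0"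
  unfolding oct_mult_def lessThan_8 by (simp_all add: oct_c_def oct_pos_iff)

lemma oct_mult_norm:
  "(\<Sum>k<8. oct_mult x y k ^ 2) = (\<Sum>k<8. x k ^ 2) * (\<Sum>k<8. y k ^ 2)"
  unfolding sum_lessThan_8 oct_mult_coeffs by (simp add: power2_eq_square algebra_simps)

lemma oct_Re_mult_sq_le:
  "(oct_Re (oct_mult x y))\<^sup>2 \<le> (\<Sum>k<8. x k ^ 2) * (\<Sum>k<8. y k ^ 2)"
proof -
  \<comment> \<open>Re (x y) is the inner product of x with the conjugate of y.\<close>
  define y' where "y' k = (if k = 0 then y k else - y k)" for k :: nat
  have "oct_Re (oct_mult x y) = (\<Sum>k<8. x k * y' k)"
    unfolding oct_Re_def oct_mult_coeffs sum_lessThan_8 y'_def by simp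
  moreover have "(\<Sum>k<8. y' k ^ 2) = (\<Sum>k<8. y k ^ 2)"
    unfolding sum_lessThan_8 y'_def by simp
  ultimately show ?thesis
    using Cauchy_Schwarz_ineq_sum[of x y' "{..<8}"] by simp
qed

lemma UNIV_8: "(UNIV :: 8 set) = {0, 1, 2, 3, 4, 5, 6, 7}"
  by (rule card_subset_eq[symmetric]) simp_all

lemma norm_sq_eq_oct_of: "(norm (X :: real^8))\<^sup>2 = (\<Sum>k<8. oct_of X k ^ 2)"
proof -
  have "(norm X)\<^sup>2 = (\<Sum>i\<in>UNIV. (X $ i)\<^sup>2)"
    unfolding norm_vec_def L2_set_def by (simp add: sum_nonneg)
  also have "\<dots> = (\<Sum>k<8. oct_of X k ^ 2)"
    unfolding UNIV_8 lessThan_8 oct_of_def by simp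
  finally show ?thesis .
qed

lemma arith_geo_mean_3:
  fixes a b c :: real
  assumes "0 \<le> a" "0 \<le> b" "0 \<le> c"
  shows "27 * (a * b * c) \<le> (a + b + c) ^ 3"
proof -
  define s where "s = (a + b) / 2"
  have "a * b \<le> s\<^sup>2"
    using sum_squares_bound[of a b] unfolding s_def by (simp add: power2_eq_square field_simps)
  then have "a * b * c \<le> s\<^sup>2 * c"
    using assms(3) by (rule mult_right_mono)
  moreover have "(2 * s + c) ^ 3 - 27 * (s\<^sup>2 * c) = (s - c)\<^sup>2 * (8 * s + c)"
    by (simp add: power2_eq_square power3_eq_cube algebra_simps)
  moreover have "0 \<le> (s - c)\<^sup>2 * (8 * s + c)"
    using assms unfolding s_def by simp
  moreover have "2 * s + c = a + b + c"
    unfolding s_def by simp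
  ultimately show ?thesis
    by (metis diff_ge_0_iff_ge mult_left_mono zero_le_numeral order_trans)
qed

lemma P24_sq_le_norms: "(P24 (X, Y, Z))\<^sup>2 \<le> (norm X)\<^sup>2 * (norm Y)\<^sup>2 * (norm Z)\<^sup>2"
proof -
  have "(P24 (X, Y, Z))\<^sup>2
      \<le> (\<Sum>k<8. oct_mult (oct_of X) (oct_of Y) k ^ 2) * (\<Sum>k<8. oct_of Z k ^ 2)"
    unfolding P24_def by (simp add: oct_Re_mult_sq_le)
  then show ?thesis
    by (simp add: oct_mult_norm norm_sq_eq_oct_of)
qed

lemma P24_sq_le:
  assumes "norm v = 1"
  shows "27 * (P24 v)\<^sup>2 \<le> 1"
proof -
  obtain X Y Z where v: "v = (X, Y, Z)"
    by (cases v) auto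
  have "(norm X)\<^sup>2 + (norm Y)\<^sup>2 + (norm Z)\<^sup>2 = 1"
    using assms unfolding v norm_Pair by (simp add: power2_eq_square)
  moreover have "27 * ((norm X)\<^sup>2 * (norm Y)\<^sup>2 * (norm Z)\<^sup>2)
      \<le> ((norm X)\<^sup>2 + (norm Y)\<^sup>2 + (norm Z)\<^sup>2) ^ 3"
    by (rule arith_geo_mean_3) simp_all
  ultimately show ?thesis
    using P24_sq_le_norms[of X Y Z] unfolding v by simp
qed

text \<open>\<open>cubic_roots W x y z\<close> says that \<open>x, y, z\<close> are the roots, with multiplicity, of
  \<open>T\<^sup>3 - T + 2W\<close> (the polynomial \<open>Q\<close> of the paper): the first two conditions fix the first two
  elementary symmetric functions, the third then fixes the product.\<close>

definition cubic_roots :: "real \<Rightarrow> real \<Rightarrow> real \<Rightarrow> real \<Rightarrow> bool" where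
  "cubic_roots W x y z \<longleftrightarrow>
     x + y + z = 0 \<and> x\<^sup>2 + y\<^sup>2 + z\<^sup>2 = 2 \<and> (\<forall>t\<in>{x, y, z}. t ^ 3 - t = - 2 * W)"

lemma cos_trisection_cubic_root:
  fixes \<phi> W :: real
  assumes "cos (3 * \<phi>) = - (3 * sqrt 3 * W)"
  shows "(2 / sqrt 3 * cos \<phi>) ^ 3 - 2 / sqrt 3 * cos \<phi> = - 2 * W"
proof -
  have r3: "sqrt 3 ^ 3 = 3 * sqrt (3::real)"
    by (simp add: power3_eq_cube)
  have "(2 / sqrt 3 * cos \<phi>) ^ 3 - 2 / sqrt 3 * cos \<phi> = 2 * (4 * cos \<phi> ^ 3 - 3 * cos \<phi>) / (3 * sqrt 3)"
    by (simp add: power_divide power_mult_distrib r3 field_simps)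
  also have "\<dots> = - 2 * W"
    using assms by (simp add: cos_treble_cos)
  finally show ?thesis .
qed

lemma mu_cubic_roots:
  fixes W \<delta> :: real
  assumes "27 * W\<^sup>2 \<le> 1"
  shows "cubic_roots W (mu W \<delta> 1 + W * \<delta>) (mu W \<delta> 2 + W * \<delta>) (mu W \<delta> 3 + W * \<delta>)"
proof -
  define r where "r = sqrt (3::real)"
  have r: "r\<^sup>2 = 3" "r > 0"
    unfolding r_def by simp_all
  have "(3 * r * W)\<^sup>2 \<le> 1"
    using assms r by (simp add: power_mult_distrib)
  then have "\<bar>3 * r * W\<bar> \<le> 1"
    using abs_le_square_iff[of "3 * r * W" 1] by simp
  then have cos_\<theta>: "cos (arccos (3 * r * W)) = 3 * r * W"
    by (simp add: cos_arccos_abs)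
  define a where "a = arccos (3 * r * W) / 3"
  have t1: "mu W \<delta> 1 + W * \<delta> = 2 / r * cos (a - pi / 3)"
    unfolding mu_def a_def r_def by (simp add: diff_divide_distrib)
  have t2: "mu W \<delta> 2 + W * \<delta> = 2 / r * cos (a + pi / 3)"
    unfolding mu_def a_def r_def by (simp add: add_divide_distrib)
  have t3: "mu W \<delta> 3 + W * \<delta> = 2 / r * cos (a + pi)"
    unfolding mu_def a_def r_def by simp
  have "cos (3 * (a - pi / 3)) = - (3 * r * W)" "cos (3 * (a + pi / 3)) = - (3 * r * W)"
    "cos (3 * (a + pi)) = - (3 * r * W)"
    unfolding a_def using cos_\<theta> by (simp_all add: algebra_simps cos_diff cos_add)
  then have cubic: "\<forall>\<phi>\<in>{a - pi / 3, a + pi / 3, a + pi}. (2 / r * cos \<phi>) ^ 3 - 2 / r * cos \<phi> = - 2 * W"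
    unfolding r_def using cos_trisection_cubic_root by blast
  have "2 / r * cos (a - pi / 3) = cos a / r + sin a"
    unfolding cos_diff using r by (simp add: cos_60 sin_60 r_def[symmetric] field_simps)
  moreover have "2 / r * cos (a + pi / 3) = cos a / r - sin a"
    unfolding cos_add using r by (simp add: cos_60 sin_60 r_def[symmetric] field_simps)
  moreover have "(cos a / r + sin a)\<^sup>2 + (cos a / r - sin a)\<^sup>2 + (- 2 * (cos a / r))\<^sup>2 = 2"
  proof -
    have "(cos a / r)\<^sup>2 = (cos a)\<^sup>2 / 3"
      using r by (simp add: power_divide)
    moreover have "(cos a / r + sin a)\<^sup>2 + (cos a / r - sin a)\<^sup>2 + (- 2 * (cos a / r))\<^sup>2
        = 6 * (cos a / r)\<^sup>2 + 2 * (sin a)\<^sup>2"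
      by (simp add: power2_eq_square algebra_simps)
    ultimately show ?thesis
      using sin_cos_squared_add[of a] by linarith
  qed
  ultimately show ?thesis
    unfolding cubic_roots_def t1 t2 t3 using cubic by simp
qed

lemma cubic_roots_difference_straddles:
  fixes t1 t2 t3 s1 s2 s3 W Wb K :: real
  assumes t: "cubic_roots W t1 t2 t3" and s: "cubic_roots Wb s1 s2 s3" and "K > 0"
  shows "min (t1 - K * s1) (min (t2 - K * s2) (t3 - K * s3)) \<le> 2 * (W - K * Wb)"
    and "2 * (W - K * Wb) \<le> max (t1 - K * s1) (max (t2 - K * s2) (t3 - K * s3))"
proof -
  define k where "k = root 3 K"
  have "k ^ 3 = K"
    unfolding k_def using \<open>K > 0\<close> by simp
  have difference_of_cubes: "(t - K * s) - 2 * (W - K * Wb) = t ^ 3 - (k * s) ^ 3"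
    if "t ^ 3 - t = - 2 * W" "s ^ 3 - s = - 2 * Wb" for t s
  proof -
    have "(k * s) ^ 3 = K * s ^ 3"
      using \<open>k ^ 3 = K\<close> by (simp add: power_mult_distrib)
    moreover have "K * s ^ 3 - K * s = - 2 * (K * Wb)"
      using arg_cong[OF that(2), of "(*) K"] by (simp add: algebra_simps)
    ultimately show ?thesis
      using that(1) by (simp only: right_diff_distrib)
  qed
  have mono: "x ^ 3 \<le> y ^ 3" if "x \<le> y" for x y :: real
    using power_mono_odd[of 3 x y] that by simp
  have above: "2 * (W - K * Wb) \<le> t - K * s"
    if "t ^ 3 - t = - 2 * W" "s ^ 3 - s = - 2 * Wb" "k * s \<le> t" for t s
    using difference_of_cubes[OF that(1,2)] mono[OF that(3)] by linarith
  have below: "t - K * s \<le> 2 * (W - K * Wb)"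
    if "t ^ 3 - t = - 2 * W" "s ^ 3 - s = - 2 * Wb" "t \<le> k * s" for t s
    using difference_of_cubes[OF that(1,2)] mono[OF that(3)] by linarith
  have ct: "t1 ^ 3 - t1 = - 2 * W" "t2 ^ 3 - t2 = - 2 * W" "t3 ^ 3 - t3 = - 2 * W"
    and cs: "s1 ^ 3 - s1 = - 2 * Wb" "s2 ^ 3 - s2 = - 2 * Wb" "s3 ^ 3 - s3 = - 2 * Wb"
    using t s unfolding cubic_roots_def by simp_all
  have "(t1 - k * s1) + (t2 - k * s2) + (t3 - k * s3) = (t1 + t2 + t3) - k * (s1 + s2 + s3)"
    by (simp add: algebra_simps)
  also have "\<dots> = 0"
    using t s unfolding cubic_roots_def by simp
  finally have "t1 \<le> k * s1 \<or> t2 \<le> k * s2 \<or> t3 \<le> k * s3"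
    and "k * s1 \<le> t1 \<or> k * s2 \<le> t2 \<or> k * s3 \<le> t3"
    by linarith+
  then show "min (t1 - K * s1) (min (t2 - K * s2) (t3 - K * s3)) \<le> 2 * (W - K * Wb)"
    and "2 * (W - K * Wb) \<le> max (t1 - K * s1) (max (t2 - K * s2) (t3 - K * s3))"
    using below[OF ct(1) cs(1)] below[OF ct(2) cs(2)] below[OF ct(3) cs(3)]
      above[OF ct(1) cs(1)] above[OF ct(2) cs(2)] above[OF ct(3) cs(3)]
    by (auto simp: min_le_iff_disj le_max_iff_disj)
qed

lemma cubic_roots_scaled_eq:
  fixes t1 t2 t3 s1 s2 s3 W Wb K :: real
  assumes t: "cubic_roots W t1 t2 t3" and s: "cubic_roots Wb s1 s2 s3" and "K > 0"
    and scaled: "t1 = K * s1" "t2 = K * s2" "t3 = K * s3"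
  shows "K = 1" and "W = Wb"
proof -
  have "t1\<^sup>2 + t2\<^sup>2 + t3\<^sup>2 = K\<^sup>2 * (s1\<^sup>2 + s2\<^sup>2 + s3\<^sup>2)"
    unfolding scaled by (simp add: power_mult_distrib algebra_simps)
  then have "K\<^sup>2 = 1"
    using t s unfolding cubic_roots_def by simp
  then show "K = 1"
    using \<open>K > 0\<close> by (simp add: power2_eq_1_iff)
  moreover have "t1 ^ 3 - t1 = - 2 * W" "s1 ^ 3 - s1 = - 2 * Wb"
    using t s unfolding cubic_roots_def by simp_all
  ultimately show "W = Wb"
    using scaled(1) by simp
qed

lemma straddled_ratio_bounds:
  fixes u1 u2 u3 e \<delta> :: real
  assumes sum: "u1 + u2 + u3 = 0" and nonzero: "\<not> (u1 = 0 \<and> u2 = 0 \<and> u3 = 0)"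
    and below: "min u1 (min u2 u3) \<le> 2 * e" and above: "2 * e \<le> max u1 (max u2 u3)"
    and "1 \<le> \<delta>" and "\<delta> < 2"
  defines "M \<equiv> max (u1 - \<delta> * e) (max (u2 - \<delta> * e) (u3 - \<delta> * e))"
    and "m \<equiv> - min (u1 - \<delta> * e) (min (u2 - \<delta> * e) (u3 - \<delta> * e))"
  shows "(2 - \<delta>) / (4 + \<delta>) \<le> M / m \<and> M / m \<le> (4 + \<delta>) / (2 - \<delta>)"
proof -
  define A where "A = max u1 (max u2 u3)"
  define B where "B = - min u1 (min u2 u3)"
  have AB: "A \<le> 2 * B" "B \<le> 2 * A" "0 < B"
    using sum nonzero unfolding A_def B_def by (auto simp: max_def min_def)
  have e: "0 \<le> B + 2 * e" "0 \<le> A - 2 * e"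
    using below above unfolding A_def B_def by simp_all
  have M: "M = A - \<delta> * e" and m: "m = B + \<delta> * e"
    unfolding M_def m_def A_def B_def by (simp_all add: max_diff_distrib_left min_diff_distrib_left)
  \<comment> \<open>Both bounds are combinations of \<open>-B \<le> 2e \<le> A\<close>, \<open>A \<le> 2B\<close> and \<open>B \<le> 2A\<close> with the
      nonnegative weights \<open>2 - \<delta>\<close> and \<open>\<delta> - 1\<close>.\<close>
  have nonneg: "0 \<le> (2 - \<delta>) * (3 * (B + 2 * e))" "0 \<le> (\<delta> - 1) * (B + 2 * e)"
    "0 \<le> (2 - \<delta>) * (3 * (A - 2 * e) + (2 * A - B))" "0 \<le> (\<delta> - 1) * (A - 2 * e)"
    "0 \<le> (2 - \<delta>) * (3 * (B + 2 * e) + (2 * B - A))"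
    using e AB \<open>1 \<le> \<delta>\<close> \<open>\<delta> < 2\<close> by simp_all
  have "0 < (2 - \<delta>) * B"
    using AB \<open>\<delta> < 2\<close> by simp
  moreover have "6 * m = (2 - \<delta>) * (3 * (B + 2 * e)) + 3 * ((2 - \<delta>) * B) + 6 * ((\<delta> - 1) * (B + 2 * e))"
    unfolding m by (simp add: algebra_simps)
  ultimately have "0 < m"
    using nonneg by linarith
  moreover have "(4 + \<delta>) * M - (2 - \<delta>) * m
      = (2 - \<delta>) * (3 * (A - 2 * e) + (2 * A - B)) + 6 * ((\<delta> - 1) * (A - 2 * e))"
    unfolding M m by (simp add: algebra_simps)
  moreover have "(4 + \<delta>) * m - (2 - \<delta>) * M
      = (2 - \<delta>) * (3 * (B + 2 * e) + (2 * B - A)) + 6 * ((\<delta> - 1) * (B + 2 * e))"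
    unfolding M m by (simp add: algebra_simps)
  ultimately show ?thesis
    using nonneg \<open>\<delta> < 2\<close> \<open>1 \<le> \<delta>\<close> by (simp add: field_simps)
qed

lemma cubic_roots_ratio_bounds:
  fixes t1 t2 t3 s1 s2 s3 W Wb K \<delta> :: real
  assumes t: "cubic_roots W t1 t2 t3" and s: "cubic_roots Wb s1 s2 s3" and "K > 0"
    and "1 \<le> \<delta>" and "\<delta> < 2" and nondegenerate: "\<not> (K = 1 \<and> W = Wb)"
  defines "M \<equiv> max (t1 - K * s1 - \<delta> * (W - K * Wb))
      (max (t2 - K * s2 - \<delta> * (W - K * Wb)) (t3 - K * s3 - \<delta> * (W - K * Wb)))"
    and "m \<equiv> - min (t1 - K * s1 - \<delta> * (W - K * Wb))
      (min (t2 - K * s2 - \<delta> * (W - K * Wb)) (t3 - K * s3 - \<delta> * (W - K * Wb)))"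
  shows "(2 - \<delta>) / (4 + \<delta>) \<le> M / m \<and> M / m \<le> (4 + \<delta>) / (2 - \<delta>)"
proof -
  have "(t1 - K * s1) + (t2 - K * s2) + (t3 - K * s3) = (t1 + t2 + t3) - K * (s1 + s2 + s3)"
    by (simp add: algebra_simps)
  also have "\<dots> = 0"
    using t s unfolding cubic_roots_def by simp
  finally have sum: "(t1 - K * s1) + (t2 - K * s2) + (t3 - K * s3) = 0" .
  have nonzero: "\<not> (t1 - K * s1 = 0 \<and> t2 - K * s2 = 0 \<and> t3 - K * s3 = 0)"
    using cubic_roots_scaled_eq[OF t s \<open>K > 0\<close>] nondegenerate by auto
  show ?thesis
    unfolding M_def m_def
    by (rule straddled_ratio_bounds[OF sum nonzero cubic_roots_difference_straddles[OF t s \<open>K > 0\<close>]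
        \<open>1 \<le> \<delta>\<close> \<open>\<delta> < 2\<close>])
qed

lemma mu_plus_eq:
  "mu_plus W Wb \<delta> K = max (mu W \<delta> 1 - K * mu Wb \<delta> 1)
     (max (mu W \<delta> 2 - K * mu Wb \<delta> 2) (mu W \<delta> 3 - K * mu Wb \<delta> 3))"
  unfolding mu_plus_def by simp

lemma mu_minus_eq:
  "mu_minus W Wb \<delta> K = min (mu W \<delta> 1 - K * mu Wb \<delta> 1)
     (min (mu W \<delta> 2 - K * mu Wb \<delta> 2) (mu W \<delta> 3 - K * mu Wb \<delta> 3))"
  unfolding mu_minus_def by simp

theorem lemma4p1:
  fixes H :: "((real^8) \<times> (real^8) \<times> (real^8)) set"
    and a b :: "(real^8) \<times> (real^8) \<times> (real^8)"
    and \<delta> K :: real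
  assumes "subspace H" and "dim H = 21"
    and "a \<in> H" and "norm a = 1" and "b \<in> H" and "norm b = 1"
    and "1 \<le> \<delta>" and "\<delta> < 2"
    and "K > 0"
    and "\<bar>K - 1\<bar> + \<bar>P24 b - P24 a\<bar> \<noteq> 0"
  shows "(2 - \<delta>) / (4 + \<delta>) \<le>
           mu_plus (P24 a) (P24 b) \<delta> K / (- mu_minus (P24 a) (P24 b) \<delta> K)
         \<and> mu_plus (P24 a) (P24 b) \<delta> K / (- mu_minus (P24 a) (P24 b) \<delta> K)
           \<le> (4 + \<delta>) / (2 - \<delta>)"
proof -
  define t where "t i = mu (P24 a) \<delta> i + P24 a * \<delta>" for i
  define s where "s i = mu (P24 b) \<delta> i + P24 b * \<delta>" for i
  have t: "cubic_roots (P24 a) (t 1) (t 2) (t 3)"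
    unfolding t_def using P24_sq_le[OF \<open>norm a = 1\<close>] by (rule mu_cubic_roots)
  have s: "cubic_roots (P24 b) (s 1) (s 2) (s 3)"
    unfolding s_def using P24_sq_le[OF \<open>norm b = 1\<close>] by (rule mu_cubic_roots)
  have nondegenerate: "\<not> (K = 1 \<and> P24 a = P24 b)"
    using assms(10) by auto
  have diff: "mu (P24 a) \<delta> i - K * mu (P24 b) \<delta> i = (t i - K * s i) - \<delta> * (P24 a - K * P24 b)" for i
    unfolding t_def s_def by (simp add: algebra_simps)
  show ?thesis
    unfolding mu_plus_eq mu_minus_eq diff
    by (rule cubic_roots_ratio_bounds[OF t s \<open>K > 0\<close> \<open>1 \<le> \<delta>\<close> \<open>\<delta> < 2\<close> nondegenerate])
qed

end
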